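(* Let $n\geq 4$ and let $H$ be a Hamiltonian cycle in the complete bipartite graph $K_{n,n}$. Then $G=K_{n,n}-H$ (the graph on $V(K_{n,n})$ with edge set $E(K_{n,n})\setminus E(H)$) is $2$-swappable.
   Context: For a graph $G$, $A\subseteq E(G)$ and $B\subseteq E(\bar G)$ (edges of the complement of $G$ in the complete graph on $V(G)$), $G-A+B$ denotes the graph on $V(G)$ with edge set $(E(G)\setminus A)\cup B$. $G$ is $2$-swappable if for every $e\in E(G)$ there exist $A\subseteq E(G)$ and $B\subseteq E(\bar G)$ with $e\in A$, $|A|\leq 2$, and $G\cong G-A+B$. *)

theory Defs
  imports Main
begin

text \<open>Simple graphs are represented by a vertex set V and an edge set E of
2-element subsets of V.\<close>

definition all_pairs :: "'a set \<Rightarrow> 'a set set" where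
  "all_pairs V = {{u, v} | u v. u \<in> V \<and> v \<in> V \<and> u \<noteq> v}"

definition compl_edges :: "'a set \<Rightarrow> 'a set set \<Rightarrow> 'a set set" where
  "compl_edges V E = all_pairs V - E"

definition graph_iso_on :: "'a set \<Rightarrow> 'a set set \<Rightarrow> 'a set set \<Rightarrow> bool" where
  "graph_iso_on V E E' \<longleftrightarrow>
     (\<exists>f. bij_betw f V V \<and> (\<forall>u\<in>V. \<forall>v\<in>V. {u, v} \<in> E \<longleftrightarrow> {f u, f v} \<in> E'))"

definition two_swappable :: "'a set \<Rightarrow> 'a set set \<Rightarrow> bool" where
  "two_swappable V E \<longleftrightarrow>
     (\<forall>e\<in>E. \<exists>A B. A \<subseteq> E \<and> B \<subseteq> compl_edges V E \<and> e \<in> A \<and> card A \<le> 2 \<and>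
        graph_iso_on V E ((E - A) \<union> B))"

definition Knn_verts :: "nat \<Rightarrow> (bool \<times> nat) set" where
  "Knn_verts n = UNIV \<times> {..<n}"

definition Knn_edges :: "nat \<Rightarrow> (bool \<times> nat) set set" where
  "Knn_edges n = {{(False, i), (True, j)} | i j. i < n \<and> j < n}"

definition ham_cycle :: "'a set \<Rightarrow> 'a set set \<Rightarrow> 'a set set \<Rightarrow> bool" where
  "ham_cycle V E H \<longleftrightarrow>
     (\<exists>vs. distinct vs \<and> set vs = V \<and> length vs \<ge> 3 \<and>
        H = {{vs ! i, vs ! ((i + 1) mod length vs)} | i. i < length vs} \<and> H \<subseteq> E)"

end

theory Submission
  imports Defs
begin

text \<open>Write the Hamiltonian cycle as v_0 v_1 ... v_{m-1}. Its vertices alternate between the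
  two sides, so m is even and v_a v_b is an edge of K_{n,n} iff a + b is odd. An edge
  e = v_i v_j (i < j) of G = K_{n,n} - H is non-consecutive on the cycle with i + j odd; so is
  f = v_{i+1} v_{j+1}. Removing e and f from G and adding v_i v_{i+1} and v_j v_{j+1} gives
  K_{n,n} - H', where H' is the Hamiltonian cycle obtained from H by a 2-opt move. Reversing the
  positions i+1, ..., j maps H onto H' and preserves the parity of a + b, hence preserves
  K_{n,n}; so it is an isomorphism from G onto the new graph.\<close>

definition cycle_adj :: "nat \<Rightarrow> nat \<Rightarrow> nat \<Rightarrow> bool" where
  "cycle_adj m a b \<longleftrightarrow> b = Suc a mod m \<or> a = Suc b mod m"

definition cycle_edges :: "'a list \<Rightarrow> 'a set set" where
  "cycle_edges vs = {{vs ! k, vs ! ((k + 1) mod length vs)} | k. k < length vs}"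

text \<open>The 2-opt move on positions of a cycle of length m: reverse the segment i+1, ..., j.\<close>

definition segment_rev :: "nat \<Rightarrow> nat \<Rightarrow> nat \<Rightarrow> nat" where
  "segment_rev i j k = (if k \<in> {i<..j} then i + j + 1 - k else k)"

definition two_opt_adj :: "nat \<Rightarrow> nat \<Rightarrow> nat \<Rightarrow> nat \<Rightarrow> nat \<Rightarrow> bool" where
  "two_opt_adj m i j x y \<longleftrightarrow>
     (cycle_adj m x y \<and> {x, y} \<noteq> {i, Suc i} \<and> {x, y} \<noteq> {j, Suc j mod m})
     \<or> {x, y} = {i, j} \<or> {x, y} = {Suc i, Suc j mod m}"

lemma cycle_adj_commute: "cycle_adj m a b \<longleftrightarrow> cycle_adj m b a"
  unfolding cycle_adj_def by auto

lemma cycle_adj_iff: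
  assumes "a < m" "b < m"
  shows "cycle_adj m a b \<longleftrightarrow> b = Suc a \<or> a = Suc b \<or> (a = 0 \<and> Suc b = m) \<or> (b = 0 \<and> Suc a = m)"
  using assms unfolding cycle_adj_def by (auto simp: mod_Suc)

lemma cycle_adj_iff_ex:
  assumes "a < m" "b < m"
  shows "cycle_adj m a b \<longleftrightarrow> (\<exists>k<m. {a, b} = {k, Suc k mod m})"
  using assms unfolding cycle_adj_def by (auto simp: doubleton_eq_iff)

lemma cycle_adj_Suc_mod:
  assumes "a < m" "b < m"
  shows "cycle_adj m (Suc a mod m) (Suc b mod m) \<longleftrightarrow> cycle_adj m a b"
  using assms unfolding cycle_adj_def by (auto simp: mod_Suc)

lemma cycle_adj_within_segment:
  assumes "j < m" "a \<in> {i<..j}" "b \<in> {i<..j}"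
  shows "cycle_adj m a b \<longleftrightarrow> b = Suc a \<or> a = Suc b"
  using assms cycle_adj_iff[of a m b] by auto

lemma cycle_adj_across_segment:
  assumes "j < m" "a \<in> {i<..j}" "b < m" "b \<notin> {i<..j}"
  shows "cycle_adj m a b \<longleftrightarrow> (a = Suc i \<and> b = i) \<or> (a = j \<and> b = Suc j mod m)"
  using assms cycle_adj_iff[of a m b] by (auto simp: mod_Suc)

lemma odd_Suc_mod_add:
  assumes "even m" "a < m"
  shows "odd (Suc a mod m + a)"
proof (cases "Suc a = m")
  case True
  then show ?thesis using assms(1) by auto
next
  case False
  then show ?thesis using assms(2) by (simp add: mod_Suc)
qed

lemma alternating_colouring:
  fixes c :: "nat \<Rightarrow> bool"
  assumes alt: "\<And>a b. a < m \<Longrightarrow> b < m \<Longrightarrow> cycle_adj m a b \<Longrightarrow> c a \<noteq> c b" and "0 < m"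
  shows "even m" and "a < m \<Longrightarrow> b < m \<Longrightarrow> c a \<noteq> c b \<longleftrightarrow> odd (a + b)"
proof -
  have colour: "c k \<longleftrightarrow> (c 0 \<longleftrightarrow> even k)" if "k < m" for k
    using that
  proof (induction k)
    case (Suc k)
    then have "c k \<noteq> c (Suc k)" using alt[of k "Suc k"] by (simp add: cycle_adj_def)
    then show ?case using Suc by auto
  qed simp
  have "c (m - 1) \<noteq> c 0" using alt[of "m - 1" 0] \<open>0 < m\<close> by (simp add: cycle_adj_def)
  then show "even m" using colour[of "m - 1"] \<open>0 < m\<close> by (cases m) auto
  show "c a \<noteq> c b \<longleftrightarrow> odd (a + b)" if "a < m" "b < m"
    using colour[OF that(1)] colour[OF that(2)] by auto
qed

lemma segment_rev_mem_iff: "segment_rev i j k \<in> {i<..j} \<longleftrightarrow> k \<in> {i<..j}"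
  unfolding segment_rev_def by auto

lemma segment_rev_less: "j < m \<Longrightarrow> k < m \<Longrightarrow> segment_rev i j k < m"
  unfolding segment_rev_def by auto

lemma segment_rev_segment_rev [simp]: "segment_rev i j (segment_rev i j k) = k"
  unfolding segment_rev_def by auto

lemma bij_betw_segment_rev:
  assumes "j < m"
  shows "bij_betw (segment_rev i j) {..<m} {..<m}"
  by (rule bij_betw_byWitness[where f' = "segment_rev i j"]) (auto simp: segment_rev_less assms)

lemma segment_rev_parity:
  assumes "odd (i + j)"
  shows "even (segment_rev i j k + k)"
proof (cases "k \<in> {i<..j}")
  case True
  then have "segment_rev i j k + k = i + j + 1" unfolding segment_rev_def by auto
  then show ?thesis using assms by simp
next
  case False
  then have "segment_rev i j k = k" unfolding segment_rev_def by (rule if_not_P)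
  then show ?thesis by simp
qed

lemma two_opt_adj_commute: "two_opt_adj m i j x y \<longleftrightarrow> two_opt_adj m i j y x"
  unfolding two_opt_adj_def by (auto simp: cycle_adj_commute insert_commute)

lemma doubleton_eq_iff_separated:
  assumes "x \<in> S" "y \<notin> S" "u \<in> S" "v \<notin> S"
  shows "{x, y} = {u, v} \<longleftrightarrow> x = u \<and> y = v" and "{x, y} = {v, u} \<longleftrightarrow> x = u \<and> y = v"
  using assms by (auto simp: doubleton_eq_iff)

lemma two_opt_adj_segment_rev_across:
  assumes "i < j" "j < m" "a \<in> {i<..j}" "b < m" "b \<notin> {i<..j}"
  defines "s \<equiv> segment_rev i j"
  shows "cycle_adj m a b \<longleftrightarrow> two_opt_adj m i j (s a) (s b)"
proof -
  let ?j' = "Suc j mod m"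
  have j': "?j' \<notin> {i<..j}" using assms(2) by (simp add: mod_Suc)
  have sb: "s b = b" using assms(5) unfolding s_def segment_rev_def by auto
  have sa: "s a \<in> {i<..j}" using assms(3) segment_rev_mem_iff s_def by blast
  have "s a = j \<longleftrightarrow> a = Suc i" "s a = Suc i \<longleftrightarrow> a = j"
    using assms(3) unfolding s_def segment_rev_def by auto
  moreover have "i \<notin> {i<..j}" "Suc i \<in> {i<..j}" "j \<in> {i<..j}" using assms(1) by auto
  then have "{s a, b} = {i, Suc i} \<longleftrightarrow> s a = Suc i \<and> b = i"
    "{s a, b} = {j, ?j'} \<longleftrightarrow> s a = j \<and> b = ?j'"
    "{s a, b} = {i, j} \<longleftrightarrow> s a = j \<and> b = i"
    "{s a, b} = {Suc i, ?j'} \<longleftrightarrow> s a = Suc i \<and> b = ?j'"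
    using doubleton_eq_iff_separated[OF sa assms(5)] j' by metis+
  moreover note cycle_adj_across_segment[OF assms(2,3,4,5)]
    cycle_adj_across_segment[OF assms(2) sa assms(4,5)]
  ultimately show ?thesis unfolding sb two_opt_adj_def by argo
qed

lemma two_opt_adj_segment_rev:
  assumes "i < j" "j < m" "a < m" "b < m"
  defines "s \<equiv> segment_rev i j"
  shows "cycle_adj m a b \<longleftrightarrow> two_opt_adj m i j (s a) (s b)"
proof -
  have j': "Suc j mod m \<notin> {i<..j}" using assms(2) by (simp add: mod_Suc)
  consider "a \<in> {i<..j}" "b \<in> {i<..j}" | "a \<in> {i<..j}" "b \<notin> {i<..j}"
    | "a \<notin> {i<..j}" "b \<in> {i<..j}" | "a \<notin> {i<..j}" "b \<notin> {i<..j}" by blast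
  then show ?thesis
  proof cases
    case 1
    then have "s a \<in> {i<..j}" "s b \<in> {i<..j}" using segment_rev_mem_iff s_def by blast+
    then have "{s a, s b} \<noteq> {i, v}" "{s a, s b} \<noteq> {v, Suc j mod m}" for v
      using j' by (auto simp: doubleton_eq_iff)
    moreover have "cycle_adj m (s a) (s b) \<longleftrightarrow> cycle_adj m a b"
      using 1 \<open>s a \<in> _\<close> \<open>s b \<in> _\<close> cycle_adj_within_segment[OF assms(2)]
      unfolding s_def segment_rev_def by auto
    ultimately show ?thesis unfolding two_opt_adj_def by auto
  next
    case 2
    then show ?thesis using two_opt_adj_segment_rev_across assms by blast
  next
    case 3
    then show ?thesis using two_opt_adj_segment_rev_across[of i j m b a] assms
      by (simp add: cycle_adj_commute two_opt_adj_commute)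
  next
    case 4
    then have "s a = a" "s b = b" unfolding s_def segment_rev_def by auto
    moreover have "Suc i \<in> {i<..j}" "j \<in> {i<..j}" using assms by auto
    ultimately show ?thesis using 4 j' unfolding two_opt_adj_def by (auto simp: doubleton_eq_iff)
  qed
qed

lemma doubleton_nth_eq_iff:
  assumes "distinct vs" "a < length vs" "b < length vs" "c < length vs" "d < length vs"
  shows "{vs ! a, vs ! b} = {vs ! c, vs ! d} \<longleftrightarrow> {a, b} = {c, d}"
  using assms by (auto simp: doubleton_eq_iff nth_eq_iff_index_eq)

lemma nth_doubleton_mem_cycle_edges_iff:
  assumes "distinct vs" "a < length vs" "b < length vs"
  shows "{vs ! a, vs ! b} \<in> cycle_edges vs \<longleftrightarrow> cycle_adj (length vs) a b"
proof -
  have "{vs ! a, vs ! b} = {vs ! k, vs ! ((k + 1) mod length vs)} \<longleftrightarrow>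
      {a, b} = {k, Suc k mod length vs}" if "k < length vs" for k
  proof -
    have "0 < length vs" using that by linarith
    then show ?thesis using doubleton_nth_eq_iff[OF assms that mod_less_divisor] by simp
  qed
  then show ?thesis unfolding cycle_edges_def using cycle_adj_iff_ex[OF assms(2,3)] by blast
qed

lemma all_pairs_set_nth:
  assumes "distinct vs" "e \<in> all_pairs (set vs)"
  obtains i j where "i < j" "j < length vs" "e = {vs ! i, vs ! j}"
proof -
  obtain a b where "a < length vs" "b < length vs" "a \<noteq> b" "e = {vs ! a, vs ! b}"
    using assms unfolding all_pairs_def by (auto simp: in_set_conv_nth)
  then show thesis
    using that[of a b] that[of b a] by (cases "a < b") (auto simp: insert_commute)
qed

lemma graph_iso_on_nth_relabel:
  assumes "distinct vs" "set vs = V" and \<sigma>: "bij_betw \<sigma> {..<length vs} {..<length vs}"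
    and edges: "\<And>a b. a < length vs \<Longrightarrow> b < length vs \<Longrightarrow>
      {vs ! a, vs ! b} \<in> E \<longleftrightarrow> {vs ! \<sigma> a, vs ! \<sigma> b} \<in> E'"
  shows "graph_iso_on V E E'"
proof -
  let ?idx = "inv_into {..<length vs} ((!) vs)"
  have nth: "bij_betw ((!) vs) {..<length vs} V"
    using bij_betw_nth[OF assms(1) refl] assms(2) by simp
  have idx: "bij_betw ?idx V {..<length vs}"
    using nth by (rule bij_betw_inv_into)
  have "bij_betw ((!) vs \<circ> \<sigma> \<circ> ?idx) V V"
    using bij_betw_trans[OF bij_betw_trans[OF idx \<sigma>] nth] by (simp add: comp_assoc)
  moreover have "{u, v} \<in> E \<longleftrightarrow> {((!) vs \<circ> \<sigma> \<circ> ?idx) u, ((!) vs \<circ> \<sigma> \<circ> ?idx) v} \<in> E'"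
    if "u \<in> V" "v \<in> V" for u v
  proof -
    have "?idx u < length vs" "?idx v < length vs" "vs ! ?idx u = u" "vs ! ?idx v = v"
      using that idx nth by (auto simp: bij_betw_def f_inv_into_f)
    then show ?thesis using edges[of "?idx u" "?idx v"] by simp
  qed
  ultimately show ?thesis unfolding graph_iso_on_def by blast
qed

lemma two_opt_graph_iso:
  assumes "distinct vs" "set vs = V"
    and H: "H = cycle_edges vs"
    and K: "\<And>a b. a < length vs \<Longrightarrow> b < length vs \<Longrightarrow> {vs ! a, vs ! b} \<in> K \<longleftrightarrow> odd (a + b)"
    and "even (length vs)" "i < j" "j < length vs" "odd (i + j)" "\<not> cycle_adj (length vs) i j"
  defines "j' \<equiv> Suc j mod length vs"
  shows "graph_iso_on V (K - H)
    (K - H - {{vs ! i, vs ! j}, {vs ! Suc i, vs ! j'}} \<union> {{vs ! i, vs ! Suc i}, {vs ! j, vs ! j'}})"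
    (is "graph_iso_on V _ ?E'")
proof -
  let ?m = "length vs"
  have KH: "{vs ! a, vs ! b} \<in> K - H \<longleftrightarrow> odd (a + b) \<and> \<not> cycle_adj ?m a b"
    if "a < ?m" "b < ?m" for a b
    using K[OF that] nth_doubleton_mem_cycle_edges_iff[OF assms(1) that] H by simp
  have E': "{vs ! x, vs ! y} \<in> ?E' \<longleftrightarrow> odd (x + y) \<and> \<not> two_opt_adj ?m i j x y"
    if "x < ?m" "y < ?m" for x y
  proof -
    have "Suc i < ?m" "j' < ?m" "j' \<noteq> j" using assms(6,7) by (auto simp: j'_def mod_Suc)
    moreover have "j \<noteq> Suc i" "j' \<noteq> i"
      using assms(6,7,9) unfolding j'_def cycle_adj_def by auto
    moreover have "odd (j + j')"
      using odd_Suc_mod_add[OF assms(5,7)] by (simp add: j'_def add.commute)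
    ultimately show ?thesis
      using KH[OF that] that assms(6,7) doubleton_nth_eq_iff[OF assms(1) that]
      unfolding two_opt_adj_def j'_def[symmetric] by (auto simp: doubleton_eq_iff)
  qed
  show ?thesis
  proof (rule graph_iso_on_nth_relabel[OF assms(1,2) bij_betw_segment_rev[OF assms(7)]])
    fix a b assume ab: "a < ?m" "b < ?m"
    have "odd (segment_rev i j a + segment_rev i j b) \<longleftrightarrow> odd (a + b)"
      using segment_rev_parity[OF assms(8), of a] segment_rev_parity[OF assms(8), of b] by presburger
    then show "{vs ! a, vs ! b} \<in> K - H \<longleftrightarrow> {vs ! segment_rev i j a, vs ! segment_rev i j b} \<in> ?E'"
      using KH[OF ab] E'[OF segment_rev_less segment_rev_less, OF assms(7) ab(1) assms(7) ab(2)]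
        two_opt_adj_segment_rev[OF assms(6,7) ab] by simp
  qed
qed

lemma two_swappable_diff_alternating_cycle:
  assumes "distinct vs" "set vs = V"
    and H: "H = cycle_edges vs"
    and K: "\<And>a b. a < length vs \<Longrightarrow> b < length vs \<Longrightarrow> {vs ! a, vs ! b} \<in> K \<longleftrightarrow> odd (a + b)"
    and "K \<subseteq> all_pairs V" "even (length vs)"
  shows "two_swappable V (K - H)"
  unfolding two_swappable_def
proof
  let ?m = "length vs"
  fix e assume e: "e \<in> K - H"
  then obtain i j where ij: "i < j" "j < ?m" and e_eq: "e = {vs ! i, vs ! j}"
    using all_pairs_set_nth[OF assms(1)] assms(2,5) by blast
  define j' where "j' = Suc j mod ?m"
  have "Suc i < ?m" "j' < ?m" using ij by (auto simp: j'_def mod_Suc)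
  have "odd (j' + j)" using odd_Suc_mod_add[OF assms(6) ij(2)] by (simp add: j'_def)
  have mem_H: "{vs ! a, vs ! b} \<in> H \<longleftrightarrow> cycle_adj ?m a b" if "a < ?m" "b < ?m" for a b
    using nth_doubleton_mem_cycle_edges_iff[OF assms(1) that] H by simp
  have "odd (i + j)" "\<not> cycle_adj ?m i j"
    using e ij K[of i j] mem_H[of i j] by (auto simp: e_eq)
  define A where "A = {e, {vs ! Suc i, vs ! j'}}"
  define B where "B = {{vs ! i, vs ! Suc i}, {vs ! j, vs ! j'}}"
  have "odd (Suc i + j')" using \<open>odd (i + j)\<close> \<open>odd (j' + j)\<close> by presburger
  moreover have "\<not> cycle_adj ?m (Suc i) j'"
    using \<open>\<not> cycle_adj ?m i j\<close> cycle_adj_Suc_mod[of i ?m j] ij by (simp add: j'_def)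
  ultimately have A: "A \<subseteq> K - H"
    using e K[OF \<open>Suc i < ?m\<close> \<open>j' < ?m\<close>] mem_H[OF \<open>Suc i < ?m\<close> \<open>j' < ?m\<close>]
    by (simp add: A_def)
  have "B \<subseteq> H"
    using mem_H[of i "Suc i"] mem_H[of j j'] \<open>Suc i < ?m\<close> \<open>j' < ?m\<close> ij
    by (simp add: B_def cycle_adj_def j'_def)
  moreover have "B \<subseteq> K"
    using \<open>odd (j' + j)\<close> K[of i "Suc i"] K[of j j'] ij \<open>Suc i < ?m\<close> \<open>j' < ?m\<close>
    by (simp add: B_def add.commute)
  ultimately have B: "B \<subseteq> compl_edges V (K - H)"
    using assms(5) by (auto simp: compl_edges_def)
  have "card A \<le> 2" by (simp add: A_def card_insert_if)
  moreover have "graph_iso_on V (K - H) (K - H - A \<union> B)"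
    unfolding A_def B_def e_eq j'_def
    using two_opt_graph_iso[OF assms(1-4,6) ij \<open>odd (i + j)\<close> \<open>\<not> cycle_adj ?m i j\<close>] .
  ultimately show "\<exists>A B. A \<subseteq> K - H \<and> B \<subseteq> compl_edges V (K - H) \<and> e \<in> A \<and> card A \<le> 2 \<and>
      graph_iso_on V (K - H) (K - H - A \<union> B)"
    using A B unfolding A_def by blast
qed

lemma Knn_edges_subset_all_pairs: "Knn_edges n \<subseteq> all_pairs (Knn_verts n)"
proof
  fix e assume "e \<in> Knn_edges n"
  then obtain i j where "e = {(False, i), (True, j)}" "i < n" "j < n" unfolding Knn_edges_def by blast
  then show "e \<in> all_pairs (Knn_verts n)" unfolding all_pairs_def Knn_verts_def by blast
qed

lemma doubleton_mem_Knn_edges_iff: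
  assumes "p \<in> Knn_verts n" "q \<in> Knn_verts n"
  shows "{p, q} \<in> Knn_edges n \<longleftrightarrow> fst p \<noteq> fst q"
proof
  show "{p, q} \<in> Knn_edges n \<Longrightarrow> fst p \<noteq> fst q"
    unfolding Knn_edges_def by (auto simp: doubleton_eq_iff)
next
  assume "fst p \<noteq> fst q"
  then have "{p, q} = {(False, snd p), (True, snd q)} \<or> {p, q} = {(False, snd q), (True, snd p)}"
    by (cases p; cases q) (auto simp: insert_commute)
  moreover have "snd p < n" "snd q < n" using assms unfolding Knn_verts_def by auto
  ultimately show "{p, q} \<in> Knn_edges n" unfolding Knn_edges_def by blast
qed

theorem mainTheorem6:
  fixes n :: nat and H :: "(bool \<times> nat) set set"
  assumes "n \<ge> 4"
    and "ham_cycle (Knn_verts n) (Knn_edges n) H"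
  shows "two_swappable (Knn_verts n) (Knn_edges n - H)"
proof -
  obtain vs where vs: "distinct vs" "set vs = Knn_verts n" "length vs \<ge> 3"
    and H: "H = cycle_edges vs"
    and "H \<subseteq> Knn_edges n"
    using assms(2) unfolding ham_cycle_def cycle_edges_def[symmetric] by blast
  let ?m = "length vs"
  have Knn_nth: "{vs ! a, vs ! b} \<in> Knn_edges n \<longleftrightarrow> fst (vs ! a) \<noteq> fst (vs ! b)"
    if "a < ?m" "b < ?m" for a b
    using doubleton_mem_Knn_edges_iff vs(2) that by (metis nth_mem)
  have "fst (vs ! a) \<noteq> fst (vs ! b)" if "a < ?m" "b < ?m" "cycle_adj ?m a b" for a b
  proof -
    have "{vs ! a, vs ! b} \<in> H"
      using nth_doubleton_mem_cycle_edges_iff[OF vs(1) that(1,2)] H that(3) by simp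
    then show ?thesis using Knn_nth[OF that(1,2)] \<open>H \<subseteq> Knn_edges n\<close> by blast
  qed
  moreover have "0 < ?m" using vs(3) by linarith
  ultimately have "even ?m" and fst_nth: "\<And>a b. a < ?m \<Longrightarrow> b < ?m \<Longrightarrow>
      fst (vs ! a) \<noteq> fst (vs ! b) \<longleftrightarrow> odd (a + b)"
    using alternating_colouring[of ?m "\<lambda>k. fst (vs ! k)"] by blast+
  show ?thesis
    using two_swappable_diff_alternating_cycle[OF vs(1,2) H _ Knn_edges_subset_all_pairs \<open>even ?m\<close>]
      Knn_nth fst_nth by simp
qed

end
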